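(* Let $c,d\in\mathbb{R}$ with $c,d>0$. Then: (1) Let $j\in\mathbb{R}$ with $j>0$. The running time of Quicksort in the worst case, i.e. the unique solution $T\in\mathcal{RT}_c$ of $T(1)=c$, $T(n)=T(n-1)+jn$ for $n\ge2$, belongs to $\mathcal{O}(g_k)$, where $k=\max\left(\frac c4+\frac j2,\frac{3j}{5}\right)$ and, for $r>0$, $g_r(1)=c$ and $g_r(n)=rn^2$ for $n\ge2$. (2) The running time of Largetwo in the average case, i.e. the unique solution $T\in\mathcal{RT}_c$ of $T(1)=c$, $T(n)=T(n-1)+2-\frac1n$ for $n\ge2$, belongs to $\mathcal{O}(g_k)$, where $k=\max\left(\frac{2c+3}{2+2d},1\right)$ and, for $r>0$, $g_r(1)=c$ and $g_r(n)=r\,(2(n-1)-\log_2 n+d)$ for $n\ge2$.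
   Context: $\mathbb{N}$ is the set of positive integers, $\mathcal{RT}$ the set of functions $\mathbb{N}\to(0,\infty]$, and $\mathcal{RT}_c=\{f\in\mathcal{RT}:f(1)=c\}$. For $f,g\in\mathcal{RT}$, $f\in\mathcal{O}(g)$ means there exist $n_0\in\mathbb{N}$ and $C\ge0$ with $f(n)\le Cg(n)$ for all $n\ge n_0$. The running times of these algorithms as functions of input size $n$ are modeled as the solutions of the stated recurrences, with $c$ the cost of the base case (Largetwo finds the two largest entries of an array of size $n$). *)

theory Defs
  imports Complex_Main
begin

text \<open>Running-time functions are modelled as functions nat => real; only the values at
  positive integers n >= 1 matter. Big-O in the paper's sense (on the positive integers).\<close>
definition bigO_RT :: "(nat \<Rightarrow> real) \<Rightarrow> (nat \<Rightarrow> real) \<Rightarrow> bool" where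
  "bigO_RT f g \<longleftrightarrow> (\<exists>n0::nat. n0 \<ge> 1 \<and> (\<exists>C::real. C \<ge> 0 \<and> (\<forall>n\<ge>n0. f n \<le> C * g n)))"

definition g_quick :: "real \<Rightarrow> real \<Rightarrow> nat \<Rightarrow> real" where
  "g_quick c r n = (if n = 1 then c else r * (real n)^2)"

definition g_largetwo :: "real \<Rightarrow> real \<Rightarrow> real \<Rightarrow> nat \<Rightarrow> real" where
  "g_largetwo c d r n = (if n = 1 then c else r * (2 * (real n - 1) - log 2 (real n) + d))"

end

theory Submission
  imports Defs
begin

text \<open>Both recurrences telescope: T n is at most c plus the sum of the increments, i.e. at most
  c + j n^2 for Quicksort and c + 2(n - 1) for Largetwo. The first is a multiple of n^2.
  For the second, log2 n \<le> n - 1 on the positive integers gives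
  n - 1 \<le> 2(n - 1) - log2 n + d. The particular value of k only matters through k > 0,
  resp. k \<ge> 1.\<close>

lemma bigO_RTI:
  assumes "C \<ge> 0" and "\<And>n. n \<ge> 2 \<Longrightarrow> f n \<le> C * g n"
  shows "bigO_RT f g"
  unfolding bigO_RT_def using assms by (intro exI[of _ 2]) auto

lemma telescoping_upper_bound:
  fixes T a :: "nat \<Rightarrow> real"
  assumes "\<And>n. n \<ge> 2 \<Longrightarrow> T n \<le> T (n - 1) + a n" and "n \<ge> 1"
  shows "T n \<le> T 1 + (\<Sum>k=2..n. a k)"
  using \<open>n \<ge> 1\<close>
proof (induction n rule: dec_induct)
  case base
  then show ?case by simp
next
  case (step m)
  have "T (Suc m) \<le> T m + a (Suc m)"
    using assms(1)[of "Suc m"] \<open>m \<ge> 1\<close> by simp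
  also have "\<dots> \<le> T 1 + (\<Sum>k=2..Suc m. a k)"
    using step.IH \<open>m \<ge> 1\<close> by (simp add: sum.atLeast_Suc_atMost_Suc_shift[symmetric])
  finally show ?case .
qed

lemma log2_le_minus_one:
  assumes "n \<ge> 1"
  shows "log 2 (real n) \<le> real n - 1"
  using assms
proof (induction n rule: dec_induct)
  case base
  then show ?case by simp
next
  case (step m)
  have "log 2 (real (Suc m)) \<le> log 2 (2 * real m)"
    using \<open>m \<ge> 1\<close> by (subst log_le_cancel_iff) auto
  also have "\<dots> = 1 + log 2 (real m)"
    using \<open>m \<ge> 1\<close> by (simp add: log_mult)
  finally show ?case
    using step.IH by simp
qed

lemma quicksort_worst_case_bound:
  fixes T :: "nat \<Rightarrow> real"
  assumes "j \<ge> 0" and rec: "\<And>n. n \<ge> 2 \<Longrightarrow> T n = T (n - 1) + j * real n" and "n \<ge> 1"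
  shows "T n \<le> T 1 + j * (real n)\<^sup>2"
proof -
  have "(\<Sum>k=2..n. real k) \<le> real (card {2..n}) * real n"
    by (rule sum_bounded_above) simp
  also have "\<dots> \<le> real n * real n"
    by (intro mult_right_mono) auto
  finally have "(\<Sum>k=2..n. real k) \<le> (real n)\<^sup>2"
    by (simp add: power2_eq_square)
  moreover have "T n \<le> T 1 + (\<Sum>k=2..n. j * real k)"
    using rec \<open>n \<ge> 1\<close> by (intro telescoping_upper_bound) simp_all
  ultimately show ?thesis
    using \<open>j \<ge> 0\<close> mult_left_mono by (fastforce simp: sum_distrib_left[symmetric])
qed

lemma largetwo_average_case_bound:
  fixes T :: "nat \<Rightarrow> real"
  assumes rec: "\<And>n. n \<ge> 2 \<Longrightarrow> T n = T (n - 1) + 2 - 1 / real n" and "n \<ge> 1"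
  shows "T n \<le> T 1 + 2 * (real n - 1)"
proof -
  have "T n \<le> T 1 + (\<Sum>k=2..n. 2)"
    using rec \<open>n \<ge> 1\<close> by (intro telescoping_upper_bound) simp_all
  then show ?thesis
    using \<open>n \<ge> 1\<close> by (simp add: of_nat_diff)
qed

lemma quicksort_worst_case_bigO:
  fixes T :: "nat \<Rightarrow> real"
  assumes "c > 0" "j > 0" "k > 0" "T 1 = c"
    and "\<And>n. n \<ge> 2 \<Longrightarrow> T n = T (n - 1) + j * real n"
  shows "bigO_RT T (g_quick c k)"
proof (rule bigO_RTI[of "(c + j) / k"])
  fix n :: nat
  assume "n \<ge> 2"
  have "T n \<le> c + j * (real n)\<^sup>2"
    using quicksort_worst_case_bound[of j T n] assms \<open>n \<ge> 2\<close> by simp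
  also have "\<dots> \<le> (c + j) * (real n)\<^sup>2"
    using \<open>n \<ge> 2\<close> \<open>c > 0\<close> by (simp add: algebra_simps)
  also have "\<dots> = (c + j) / k * g_quick c k n"
    using \<open>k > 0\<close> \<open>n \<ge> 2\<close> by (simp add: g_quick_def)
  finally show "T n \<le> (c + j) / k * g_quick c k n" .
qed (use assms in simp)

lemma largetwo_average_case_bigO:
  fixes T :: "nat \<Rightarrow> real"
  assumes "c > 0" "d > 0" "k \<ge> 1" and T1: "T 1 = c"
    and rec: "\<And>n. n \<ge> 2 \<Longrightarrow> T n = T (n - 1) + 2 - 1 / real n"
  shows "bigO_RT T (g_largetwo c d k)"
proof (rule bigO_RTI[of "c + 2"])
  fix n :: nat
  assume "n \<ge> 2"
  then have log_n: "log 2 (real n) \<le> real n - 1"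
    by (intro log2_le_minus_one) simp
  have "T n \<le> c + 2 * (real n - 1)"
    using largetwo_average_case_bound[of T n] T1 rec \<open>n \<ge> 2\<close> by simp
  also have "\<dots> \<le> (c + 2) * (real n - 1)"
    using \<open>n \<ge> 2\<close> \<open>c > 0\<close> by (simp add: algebra_simps)
  also have "\<dots> \<le> (c + 2) * (2 * (real n - 1) - log 2 (real n) + d)"
    using log_n \<open>c > 0\<close> \<open>d > 0\<close> by (intro mult_left_mono) auto
  also have "\<dots> \<le> (c + 2) * g_largetwo c d k n"
    using log_n \<open>n \<ge> 2\<close> assms
    by (intro mult_left_mono) (auto simp: g_largetwo_def intro!: mult_le_cancel_right1)
  finally show "T n \<le> (c + 2) * g_largetwo c d k n" .
qed (use assms in simp)

theorem corollary13:
  fixes c d :: real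
  assumes c_pos: "c > 0" and d_pos: "d > 0"
  shows
    "(\<forall>(j::real) (T::nat \<Rightarrow> real).
        j > 0 \<longrightarrow> T 1 = c \<longrightarrow> (\<forall>n\<ge>2. T n = T (n - 1) + j * real n) \<longrightarrow>
        bigO_RT T (g_quick c (max (c / 4 + j / 2) (3 * j / 5))))
     \<and>
     (\<forall>T::nat \<Rightarrow> real.
        T 1 = c \<longrightarrow> (\<forall>n\<ge>2. T n = T (n - 1) + 2 - 1 / real n) \<longrightarrow>
        bigO_RT T (g_largetwo c d (max ((2 * c + 3) / (2 + 2 * d)) 1)))"
proof (intro conjI allI impI)
  fix j :: real and T :: "nat \<Rightarrow> real"
  assume "j > 0" "T 1 = c" "\<forall>n\<ge>2. T n = T (n - 1) + j * real n"
  moreover have "max (c / 4 + j / 2) (3 * j / 5) > 0"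
    using \<open>j > 0\<close> by simp
  ultimately show "bigO_RT T (g_quick c (max (c / 4 + j / 2) (3 * j / 5)))"
    using c_pos by (intro quicksort_worst_case_bigO) auto
next
  fix T :: "nat \<Rightarrow> real"
  assume "T 1 = c" "\<forall>n\<ge>2. T n = T (n - 1) + 2 - 1 / real n"
  then show "bigO_RT T (g_largetwo c d (max ((2 * c + 3) / (2 + 2 * d)) 1))"
    using c_pos d_pos by (intro largetwo_average_case_bigO) auto
qed

end
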